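(* Let $(A,\mathfrak m)$ be a Cohen–Macaulay local ring of dimension $d\ge2$ with infinite residue field, let $x_1,\dots,x_d$ be an $A$-superficial sequence, $J=(x_1,\dots,x_d)$, and $(B,\mathfrak n)=(A/(x_1),\mathfrak m/(x_1))$. For an ideal $I$ of $A$ write $\overline I$ for its image in $B$. Since $\overline{\widetilde{\mathfrak m^i}}\subseteq\widetilde{\mathfrak n^i}$, there are natural maps $\eta_i:\widetilde{\mathfrak m^{i+1}}/J\widetilde{\mathfrak m^i}\to\widetilde{\mathfrak n^{i+1}}/\overline J\,\widetilde{\mathfrak n^i}$, $p+J\widetilde{\mathfrak m^i}\mapsto \overline p+\overline J\widetilde{\mathfrak n^i}$, for all $i\ge0$. Then: (1) if $\overline{\widetilde{\mathfrak m^s}}=\widetilde{\mathfrak n^s}$ for some $s$, then $\eta_s$ is injective; (2) if $\overline{\widetilde{\mathfrak m^j}}=\widetilde{\mathfrak n^j}$ for $j=s,s+1$, then $\eta_s$ is bijective.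
   Context: An element $x\in\mathfrak m$ is $A$-superficial if there are $c,n_0$ with $(\mathfrak m^{n+1}:x)\cap\mathfrak m^c=\mathfrak m^n$ for all $n\ge n_0$; a sequence $x_1,\dots,x_r$ is $A$-superficial if $x_1$ is $A$-superficial and $x_i$ is $A/(x_1,\dots,x_{i-1})$-superficial for $i\ge2$. For a local ring $(R,\mathfrak q)$ of positive depth, the Ratliff–Rush closure is $\widetilde{\mathfrak q^i}=\bigcup_{k\ge1}(\mathfrak q^{i+k}:\mathfrak q^k)$ for $i\ge1$, with $\widetilde{\mathfrak q^0}=R$. *)

theory Defs
  imports "HOL-Algebra.Algebra"
begin

primrec ideal_pow :: "('a, 'b) ring_scheme \<Rightarrow> 'a set \<Rightarrow> nat \<Rightarrow> 'a set" where
  "ideal_pow R I 0 = carrier R"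
| "ideal_pow R I (Suc n) = ideal_prod R I (ideal_pow R I n)"

definition colon_ideal :: "('a, 'b) ring_scheme \<Rightarrow> 'a set \<Rightarrow> 'a set \<Rightarrow> 'a set" where
  "colon_ideal R I K = {a \<in> carrier R. \<forall>k\<in>K. a \<otimes>\<^bsub>R\<^esub> k \<in> I}"

definition ratliff_rush :: "('a, 'b) ring_scheme \<Rightarrow> 'a set \<Rightarrow> nat \<Rightarrow> 'a set" where
  "ratliff_rush R q i =
     (if i = 0 then carrier R
      else (\<Union>k\<in>{1..}. colon_ideal R (ideal_pow R q (i + k)) (ideal_pow R q k)))"

definition qimg :: "('a, 'b) ring_scheme \<Rightarrow> 'a set \<Rightarrow> 'a set \<Rightarrow> 'a set set" where
  "qimg R I S = (\<lambda>a. I +>\<^bsub>R\<^esub> a) ` S"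

definition local_ring :: "('a, 'b) ring_scheme \<Rightarrow> 'a set \<Rightarrow> bool" where
  "local_ring R m \<longleftrightarrow> cring R \<and> noetherian_ring R \<and> maximalideal m R \<and>
     (\<forall>M. maximalideal M R \<longrightarrow> M = m)"

definition prime_chain :: "('a, 'b) ring_scheme \<Rightarrow> nat \<Rightarrow> bool" where
  "prime_chain R n \<longleftrightarrow> (\<exists>P :: nat \<Rightarrow> 'a set.
      (\<forall>i\<le>n. primeideal (P i) R) \<and> (\<forall>i<n. P i \<subset> P (Suc i)))"

definition krull_dim :: "('a, 'b) ring_scheme \<Rightarrow> nat \<Rightarrow> bool" where
  "krull_dim R d \<longleftrightarrow> prime_chain R d \<and> \<not> prime_chain R (Suc d)"

definition regular_seq :: "('a, 'b) ring_scheme \<Rightarrow> 'a set \<Rightarrow> (nat \<Rightarrow> 'a) \<Rightarrow> nat \<Rightarrow> bool" where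
  "regular_seq R m y n \<longleftrightarrow>
     (\<forall>i\<in>{1..n}. y i \<in> m \<and>
        (\<forall>a\<in>carrier R. y i \<otimes>\<^bsub>R\<^esub> a \<in> genideal R (y ` {1..i-1}) \<longrightarrow>
                        a \<in> genideal R (y ` {1..i-1}))) \<and>
     genideal R (y ` {1..n}) \<noteq> carrier R"

definition depth :: "('a, 'b) ring_scheme \<Rightarrow> 'a set \<Rightarrow> nat \<Rightarrow> bool" where
  "depth R m n \<longleftrightarrow> (\<exists>y. regular_seq R m y n) \<and> \<not> (\<exists>y. regular_seq R m y (Suc n))"

definition cohen_macaulay :: "('a, 'b) ring_scheme \<Rightarrow> 'a set \<Rightarrow> bool" where
  "cohen_macaulay R m \<longleftrightarrow> local_ring R m \<and> (\<exists>d. krull_dim R d \<and> depth R m d)"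

definition superficial :: "('a, 'b) ring_scheme \<Rightarrow> 'a set \<Rightarrow> 'a \<Rightarrow> bool" where
  "superficial R m x \<longleftrightarrow> x \<in> m \<and>
     (\<exists>c n0. \<forall>n\<ge>n0. colon_ideal R (ideal_pow R m (Suc n)) {x} \<inter> ideal_pow R m c
                       = ideal_pow R m n)"

definition superficial_seq :: "('a, 'b) ring_scheme \<Rightarrow> 'a set \<Rightarrow> (nat \<Rightarrow> 'a) \<Rightarrow> nat \<Rightarrow> bool" where
  "superficial_seq A m x r \<longleftrightarrow> superficial A m (x 1) \<and>
     (\<forall>i\<in>{2..r}. superficial (A Quot (genideal A (x ` {1..i-1})))
                      (qimg A (genideal A (x ` {1..i-1})) m)
                      (genideal A (x ` {1..i-1}) +>\<^bsub>A\<^esub> x i))"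

definition eta_dom :: "('a, 'b) ring_scheme \<Rightarrow> 'a set \<Rightarrow> 'a set \<Rightarrow> nat \<Rightarrow> 'a set set" where
  "eta_dom A m J i =
     {(ideal_prod A J (ratliff_rush A m i)) +>\<^bsub>A\<^esub> p | p. p \<in> ratliff_rush A m (Suc i)}"

definition eta_cod :: "('a, 'b) ring_scheme \<Rightarrow> 'a set \<Rightarrow> 'a set \<Rightarrow> 'a set \<Rightarrow> nat \<Rightarrow> 'a set set set" where
  "eta_cod A m J X1 i =
     (let B = A Quot X1; n = qimg A X1 m; Jb = qimg A X1 J in
      {(ideal_prod B Jb (ratliff_rush B n i)) +>\<^bsub>B\<^esub> q | q. q \<in> ratliff_rush B n (Suc i)})"

definition eta :: "('a, 'b) ring_scheme \<Rightarrow> 'a set \<Rightarrow> 'a set \<Rightarrow> 'a set \<Rightarrow> nat \<Rightarrow> 'a set \<Rightarrow> 'a set set" where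
  "eta A m J X1 i C =
     (let B = A Quot X1; n = qimg A X1 m; Jb = qimg A X1 J;
          p = (SOME p. p \<in> ratliff_rush A m (Suc i) \<and>
                        C = (ideal_prod A J (ratliff_rush A m i)) +>\<^bsub>A\<^esub> p) in
      (ideal_prod B Jb (ratliff_rush B n i)) +>\<^bsub>B\<^esub> (X1 +>\<^bsub>A\<^esub> p))"

end

theory Submission
  imports Defs
begin

text \<open>Write R_i for the Ratliff--Rush closure of m^i and P = J R_s. Under the hypothesis in
  degree s, the target of eta_s is a quotient by the image of P in B, so eta_s identifies p, q in
  R_(s+1) exactly when p - q lies in P + (x_1). Injectivity therefore amounts to
  R_(s+1) \<inter> (P + (x_1)) = P: if w + r x_1 \<in> R_(s+1) with w \<in> P, then r x_1 \<in> R_(s+1), and the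
  superficiality of x_1 (through a \<in> R_i iff a m^k \<subseteq> m^(i+k) for some k) gives r \<in> R_s, so
  r x_1 \<in> J R_s = P. Surjectivity holds once every element of the closure of n^(s+1) lifts to
  R_(s+1), which is the hypothesis in degree s + 1.\<close>

lemma (in ring) ideal_pow_ideal: "ideal I R \<Longrightarrow> ideal (ideal_pow R I k) R"
  by (induction k) (auto simp: oneideal ideal_prod_is_ideal)

lemma (in ring) ideal_pow_add_subset:
  assumes "ideal I R"
  shows "ideal_pow R I (k + l) \<subseteq> ideal_pow R I k"
proof (induction l)
  case (Suc l)
  have "ideal_pow R I (k + Suc l) \<subseteq> ideal_pow R I (k + l)"
    using ideal_prod_inter[OF assms ideal_pow_ideal[OF assms]] by simp
  with Suc show ?case by blast
qed simp

lemma (in cring) mult_ideal_prod_subset: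
  assumes I: "ideal I R" and K: "ideal K R" and c: "c \<in> carrier R"
    and cK: "\<forall>v\<in>K. c \<otimes> v \<in> L"
  shows "\<forall>u\<in>I \<cdot> K. c \<otimes> u \<in> I \<cdot> L"
proof
  fix u assume "u \<in> I \<cdot> K"
  then show "c \<otimes> u \<in> I \<cdot> L"
  proof (induct u rule: ideal_prod.induct)
    case (prod y v)
    have "c \<otimes> (y \<otimes> v) = y \<otimes> (c \<otimes> v)"
      using ideal.Icarr[OF I prod(1)] ideal.Icarr[OF K prod(2)] c by (simp add: m_lcomm)
    then show ?case using prod cK ideal_prod.prod by metis
  next
    case (sum u1 u2)
    have "u1 \<in> carrier R" "u2 \<in> carrier R"
      using sum(1,3) ideal_prod_in_carrier[OF I K] by auto
    then have "c \<otimes> (u1 \<oplus> u2) = c \<otimes> u1 \<oplus> c \<otimes> u2" using c r_distr by simp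
    then show ?case using ideal_prod.sum[OF sum(2,4)] by simp
  qed
qed

lemma (in cring) ideal_pow_mult_shift:
  assumes I: "ideal I R" and c: "c \<in> carrier R"
    and ck: "\<forall>w\<in>ideal_pow R I k. c \<otimes> w \<in> ideal_pow R I (t + k)"
  shows "\<forall>u\<in>ideal_pow R I (k + l). c \<otimes> u \<in> ideal_pow R I (t + (k + l))"
proof (induction l)
  case (Suc l)
  then show ?case
    using mult_ideal_prod_subset[OF I ideal_pow_ideal[OF I] c] by simp
qed (use ck in simp)

lemma (in cring) ideal_criterion:
  assumes S: "S \<subseteq> carrier R" and zero: "\<zero> \<in> S"
    and add: "\<And>a b. a \<in> S \<Longrightarrow> b \<in> S \<Longrightarrow> a \<oplus> b \<in> S"
    and mult: "\<And>a r. a \<in> S \<Longrightarrow> r \<in> carrier R \<Longrightarrow> r \<otimes> a \<in> S"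
  shows "ideal S R"
proof (rule idealI)
  show "subgroup S (add_monoid R)"
  proof (rule add.subgroupI)
    fix a assume a: "a \<in> S"
    then have "\<ominus> a = (\<ominus> \<one>) \<otimes> a" using S by (simp add: l_minus subsetD)
    then show "\<ominus> a \<in> S" using mult[OF a] by simp
  qed (use S zero add in auto)
next
  fix a r assume "a \<in> S" "r \<in> carrier R"
  then show "r \<otimes> a \<in> S" "a \<otimes> r \<in> S" using mult S m_comm by (auto simp: subsetD)
qed (rule ring_axioms)

lemma (in cring) ratliff_rush_eq:
  assumes I: "ideal I R"
  shows "ratliff_rush R I s =
    {a \<in> carrier R. \<exists>k. \<forall>w\<in>ideal_pow R I k. a \<otimes> w \<in> ideal_pow R I (s + k)}"
proof (cases "s = 0")
  case True
  then show ?thesis unfolding ratliff_rush_def by (auto intro: exI[of _ 0])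
next
  case False
  have "a \<in> ratliff_rush R I s"
    if a: "a \<in> carrier R" and k: "\<forall>w\<in>ideal_pow R I k. a \<otimes> w \<in> ideal_pow R I (s + k)" for a k
  proof -
    \<comment> \<open>the union in the definition starts at exponent 1, so pass from k to k + 1\<close>
    have "a \<in> colon_ideal R (ideal_pow R I (s + (k + 1))) (ideal_pow R I (k + 1))"
      using ideal_pow_mult_shift[OF I a k] a unfolding colon_ideal_def by blast
    then show ?thesis using False unfolding ratliff_rush_def by force
  qed
  then show ?thesis using False unfolding ratliff_rush_def colon_ideal_def by auto
qed

lemma (in cring) ratliff_rush_ideal:
  assumes I: "ideal I R"
  shows "ideal (ratliff_rush R I s) R"
proof -
  interpret pow: ideal "ideal_pow R I k" R for k by (rule ideal_pow_ideal[OF I])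
  show ?thesis
  proof (rule ideal_criterion)
    show "ratliff_rush R I s \<subseteq> carrier R" "\<zero> \<in> ratliff_rush R I s"
      unfolding ratliff_rush_eq[OF I] by (auto intro: exI[of _ 0])
  next
    fix a b assume "a \<in> ratliff_rush R I s" "b \<in> ratliff_rush R I s"
    then obtain k l where a: "a \<in> carrier R" "\<forall>w\<in>ideal_pow R I k. a \<otimes> w \<in> ideal_pow R I (s + k)"
      and b: "b \<in> carrier R" "\<forall>w\<in>ideal_pow R I l. b \<otimes> w \<in> ideal_pow R I (s + l)"
      unfolding ratliff_rush_eq[OF I] by blast
    have "\<forall>w\<in>ideal_pow R I (k + l). a \<otimes> w \<in> ideal_pow R I (s + (k + l))"
      "\<forall>w\<in>ideal_pow R I (l + k). b \<otimes> w \<in> ideal_pow R I (s + (l + k))"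
      using ideal_pow_mult_shift[OF I a] ideal_pow_mult_shift[OF I b] by auto
    then have "\<forall>w\<in>ideal_pow R I (k + l). (a \<oplus> b) \<otimes> w \<in> ideal_pow R I (s + (k + l))"
      using a(1) b(1) by (simp add: add.commute l_distr)
    then show "a \<oplus> b \<in> ratliff_rush R I s"
      unfolding ratliff_rush_eq[OF I] using a b by blast
  next
    fix a r assume "a \<in> ratliff_rush R I s" "r \<in> carrier R"
    then show "r \<otimes> a \<in> ratliff_rush R I s"
      unfolding ratliff_rush_eq[OF I] by (fastforce simp: m_assoc intro: pow.I_l_closed)
  qed
qed

lemma (in cring) ratliff_rush_mult:
  assumes I: "ideal I R" and y: "y \<in> I" and a: "a \<in> ratliff_rush R I s"
  shows "y \<otimes> a \<in> ratliff_rush R I (Suc s)"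
proof -
  interpret pow: ideal "ideal_pow R I k" R for k by (rule ideal_pow_ideal[OF I])
  obtain k where ac: "a \<in> carrier R"
    and k: "\<forall>w\<in>ideal_pow R I k. a \<otimes> w \<in> ideal_pow R I (s + k)"
    using a unfolding ratliff_rush_eq[OF I] by blast
  have yc: "y \<in> carrier R" by (rule ideal.Icarr[OF I y])
  have "\<forall>w\<in>ideal_pow R I k. (y \<otimes> a) \<otimes> w \<in> ideal_pow R I (Suc s + k)"
  proof
    fix w assume w: "w \<in> ideal_pow R I k"
    have "y \<otimes> (a \<otimes> w) \<in> I \<cdot> ideal_pow R I (s + k)"
      using ideal_prod.prod[OF y] k w by blast
    then show "(y \<otimes> a) \<otimes> w \<in> ideal_pow R I (Suc s + k)"
      using ac yc pow.Icarr[OF w] by (simp add: m_assoc)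
  qed
  then show ?thesis unfolding ratliff_rush_eq[OF I] using ac yc by blast
qed

lemma (in cring) ideal_prod_ratliff_rush_subset:
  assumes I: "ideal I R" and JI: "J \<subseteq> I"
  shows "J \<cdot> ratliff_rush R I s \<subseteq> ratliff_rush R I (Suc s)"
proof
  fix z assume "z \<in> J \<cdot> ratliff_rush R I s"
  then show "z \<in> ratliff_rush R I (Suc s)"
  proof (induct z rule: ideal_prod.induct)
    case (prod y a)
    then show ?case using ratliff_rush_mult[OF I] JI by blast
  next
    case (sum z1 z2)
    show ?case
      by (rule additive_subgroup.a_closed[OF ideal.axioms(1)[OF ratliff_rush_ideal[OF I]] sum(2,4)])
  qed
qed

lemma (in cring) superficial_ratliff_rush_cancel:
  assumes I: "ideal I R" and x: "superficial R I x" and a: "a \<in> carrier R"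
    and ax: "a \<otimes> x \<in> ratliff_rush R I (Suc s)"
  shows "a \<in> ratliff_rush R I s"
proof -
  interpret pow: ideal "ideal_pow R I k" R for k by (rule ideal_pow_ideal[OF I])
  obtain c n0 where xI: "x \<in> I" and
    colon: "\<forall>n\<ge>n0. colon_ideal R (ideal_pow R I (Suc n)) {x} \<inter> ideal_pow R I c = ideal_pow R I n"
    using x unfolding superficial_def by blast
  have xc: "x \<in> carrier R" by (rule ideal.Icarr[OF I xI])
  obtain k where k: "\<forall>w\<in>ideal_pow R I k. (a \<otimes> x) \<otimes> w \<in> ideal_pow R I (Suc s + k)"
    using ax unfolding ratliff_rush_eq[OF I] by blast
  \<comment> \<open>go deep enough that both the exponent c and the threshold n0 of superficiality are passed\<close>
  define K where "K = k + (c + n0)"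
  have "a \<otimes> x \<in> carrier R" using a xc by simp
  from ideal_pow_mult_shift[OF I this k, of "c + n0"]
  have axK: "\<forall>u\<in>ideal_pow R I K. (a \<otimes> x) \<otimes> u \<in> ideal_pow R I (Suc (s + K))"
    unfolding K_def by (simp only: add_Suc)
  have "a \<otimes> u \<in> ideal_pow R I (s + K)" if u: "u \<in> ideal_pow R I K" for u
  proof -
    have "ideal_pow R I K \<subseteq> ideal_pow R I c"
      using ideal_pow_add_subset[OF I, of c "k + n0"] unfolding K_def by (simp add: ac_simps)
    then have "a \<otimes> u \<in> ideal_pow R I c" using u a pow.I_l_closed by blast
    moreover
    have "(a \<otimes> u) \<otimes> x = (a \<otimes> x) \<otimes> u"
      using a xc pow.Icarr[OF u] by (simp add: m_assoc m_comm[of u x])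
    then have "a \<otimes> u \<in> colon_ideal R (ideal_pow R I (Suc (s + K))) {x}"
      using axK u a pow.Icarr[OF u] unfolding colon_ideal_def by auto
    moreover have "s + K \<ge> n0" unfolding K_def by simp
    ultimately show ?thesis using colon[rule_format, of "s + K"] by blast
  qed
  then have "\<exists>k. \<forall>u\<in>ideal_pow R I k. a \<otimes> u \<in> ideal_pow R I (s + k)" by blast
  then show ?thesis unfolding ratliff_rush_eq[OF I] using a by blast
qed

lemma (in cring) qimg_ideal_prod:
  assumes N: "ideal N R" and I: "ideal I R" and K: "ideal K R"
  shows "qimg R N (I \<cdot> K) = qimg R N I \<cdot>\<^bsub>R Quot N\<^esub> qimg R N K"
proof -
  interpret q: ring_hom_ring R "R Quot N" "(+>) N" by (rule ideal.rcos_ring_hom_ring[OF N])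
  have IKc: "I \<cdot> K \<subseteq> carrier R" by (rule ideal_prod_in_carrier[OF I K])
  have "N +> w \<in> qimg R N I \<cdot>\<^bsub>R Quot N\<^esub> qimg R N K" if "w \<in> I \<cdot> K" for w
    using that
  proof (induct w rule: ideal_prod.induct)
    case (prod i k)
    have "(N +> i) \<otimes>\<^bsub>R Quot N\<^esub> (N +> k) \<in> qimg R N I \<cdot>\<^bsub>R Quot N\<^esub> qimg R N K"
      using prod unfolding qimg_def by (intro ideal_prod.prod imageI)
    then show ?case using ideal.Icarr[OF I prod(1)] ideal.Icarr[OF K prod(2)] by simp
  next
    case (sum w1 w2)
    then show ?case using IKc ideal_prod.sum[OF sum(2,4)] by (simp add: subsetD)
  qed
  moreover have "z \<in> qimg R N (I \<cdot> K)" if "z \<in> qimg R N I \<cdot>\<^bsub>R Quot N\<^esub> qimg R N K" for z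
    using that
  proof (induct z rule: ideal_prod.induct)
    case (prod i' k')
    then obtain i k where "i \<in> I" "k \<in> K" "i' = N +> i" "k' = N +> k"
      unfolding qimg_def by blast
    moreover have "i \<otimes> k \<in> I \<cdot> K" using \<open>i \<in> I\<close> \<open>k \<in> K\<close> by (rule ideal_prod.prod)
    ultimately show ?case unfolding qimg_def
      using ideal.Icarr[OF I \<open>i \<in> I\<close>] ideal.Icarr[OF K \<open>k \<in> K\<close>] by force
  next
    case (sum z1 z2)
    have "ideal (qimg R N (I \<cdot> K)) (R Quot N)"
      unfolding qimg_def by (rule ring_ideal_imp_quot_ideal[OF N ideal_prod_is_ideal[OF I K]])
    then show ?case by (rule additive_subgroup.a_closed[OF ideal.axioms(1) sum(2,4)])
  qed
  ultimately show ?thesis unfolding qimg_def by blast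
qed

lemma (in ring) rcos_mem_qimg_iff:
  assumes N: "ideal N R" and P: "ideal P R" and a: "a \<in> carrier R"
  shows "N +> a \<in> qimg R N P \<longleftrightarrow> a \<in> P <+>\<^bsub>R\<^esub> N"
proof
  assume "N +> a \<in> qimg R N P"
  then obtain w where w: "w \<in> P" "N +> a = N +> w" unfolding qimg_def by blast
  have wc: "w \<in> carrier R" by (rule ideal.Icarr[OF P w(1)])
  have "a \<ominus> w \<in> N" using quotient_eq_iff_same_a_r_cos[OF N a wc] w(2) by simp
  moreover have "a = w \<oplus> (a \<ominus> w)" using a wc by algebra
  ultimately show "a \<in> P <+>\<^bsub>R\<^esub> N" using w(1) unfolding set_add_def' by blast
next
  assume "a \<in> P <+>\<^bsub>R\<^esub> N"
  then obtain w y where wy: "w \<in> P" "y \<in> N" "a = w \<oplus> y" unfolding set_add_def' by blast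
  have wc: "w \<in> carrier R" by (rule ideal.Icarr[OF P wy(1)])
  have yc: "y \<in> carrier R" by (rule ideal.Icarr[OF N wy(2)])
  have "a \<ominus> w = y" using wc yc wy(3) by algebra
  then have "N +> a = N +> w" using quotient_eq_iff_same_a_r_cos[OF N a wc] wy(2) by simp
  then show "N +> a \<in> qimg R N P" using wy(1) unfolding qimg_def by blast
qed

lemma (in ring) mem_of_rcos_mem_qimg:
  assumes m: "ideal m R" and N: "ideal N R" "N \<subseteq> m" and a: "a \<in> carrier R"
    and aN: "N +> a \<in> qimg R N m"
  shows "a \<in> m"
proof -
  have "a \<in> m <+>\<^bsub>R\<^esub> N" using rcos_mem_qimg_iff[OF N(1) m a] aN by simp
  then obtain w y where "w \<in> m" "y \<in> N" "a = w \<oplus> y" unfolding set_add_def' by blast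
  moreover from \<open>y \<in> N\<close> have "y \<in> m" using N(2) by blast
  ultimately show ?thesis using additive_subgroup.a_closed[OF ideal.axioms(1)[OF m]] by simp
qed

lemma (in cring) superficial_seq_mem:
  assumes m: "ideal m R" and x: "\<forall>i\<in>{1..d}. x i \<in> carrier R"
    and sup: "superficial_seq R m x d"
  shows "i \<in> {1..d} \<Longrightarrow> x i \<in> m"
proof (induction i rule: less_induct)
  case (less i)
  show ?case
  proof (cases "i = 1")
    case True
    then show ?thesis using sup unfolding superficial_seq_def superficial_def by simp
  next
    case False
    define N where "N = genideal R (x ` {1..i - 1})"
    have "x ` {1..i - 1} \<subseteq> carrier R" "x ` {1..i - 1} \<subseteq> m"
      using x less by auto
    then have N: "ideal N R" "N \<subseteq> m"
      unfolding N_def by (simp_all add: genideal_ideal genideal_minimal[OF m])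
    have "i \<in> {2..d}" using less.prems False by simp
    then have "superficial (R Quot N) (qimg R N m) (N +> x i)"
      using sup unfolding superficial_seq_def N_def by blast
    then have "N +> x i \<in> qimg R N m" unfolding superficial_def by blast
    then show ?thesis using mem_of_rcos_mem_qimg[OF m N] x less.prems by blast
  qed
qed

lemma (in cring) ratliff_rush_Suc_inter_ideal_prod:
  assumes m: "ideal m R" and x: "superficial R m x" "x \<in> J" and Jm: "J \<subseteq> m"
  shows "ratliff_rush R m (Suc s) \<inter> (J \<cdot> ratliff_rush R m s <+>\<^bsub>R\<^esub> PIdl x)
       = J \<cdot> ratliff_rush R m s"
proof -
  interpret RR: ideal "ratliff_rush R m k" R for k by (rule ratliff_rush_ideal[OF m])
  have sub: "J \<cdot> ratliff_rush R m s \<subseteq> ratliff_rush R m (Suc s)"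
    by (rule ideal_prod_ratliff_rush_subset[OF m Jm])
  have xc: "x \<in> carrier R" using x(2) Jm ideal.Icarr[OF m] by blast
  show ?thesis
  proof
    show "ratliff_rush R m (Suc s) \<inter> (J \<cdot> ratliff_rush R m s <+>\<^bsub>R\<^esub> PIdl x)
      \<subseteq> J \<cdot> ratliff_rush R m s"
    proof
      fix a assume "a \<in> ratliff_rush R m (Suc s) \<inter> (J \<cdot> ratliff_rush R m s <+>\<^bsub>R\<^esub> PIdl x)"
      then obtain w r where a: "a \<in> ratliff_rush R m (Suc s)" and w: "w \<in> J \<cdot> ratliff_rush R m s"
        and r: "r \<in> carrier R" and arw: "a = w \<oplus> r \<otimes> x"
        unfolding set_add_def' cgenideal_def by blast
      have w1: "w \<in> ratliff_rush R m (Suc s)" using sub w by blast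
      have "r \<otimes> x = a \<ominus> w" using arw RR.Icarr[OF w1] r xc by algebra
      also have "\<dots> \<in> ratliff_rush R m (Suc s)"
        unfolding a_minus_def by (intro RR.a_closed RR.a_inv_closed a w1)
      finally have "r \<in> ratliff_rush R m s" by (rule superficial_ratliff_rush_cancel[OF m x(1) r])
      then have "x \<otimes> r \<in> J \<cdot> ratliff_rush R m s" by (rule ideal_prod.prod[OF x(2)])
      then show "a \<in> J \<cdot> ratliff_rush R m s"
        using ideal_prod.sum[OF w] arw r xc by (simp add: m_comm)
    qed
  next
    show "J \<cdot> ratliff_rush R m s
      \<subseteq> ratliff_rush R m (Suc s) \<inter> (J \<cdot> ratliff_rush R m s <+>\<^bsub>R\<^esub> PIdl x)"
    proof
      fix w assume w: "w \<in> J \<cdot> ratliff_rush R m s"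
      have "w = w \<oplus> \<zero> \<otimes> x" using sub w RR.Icarr xc by auto
      then have "w \<in> J \<cdot> ratliff_rush R m s <+>\<^bsub>R\<^esub> PIdl x"
        unfolding set_add_def' cgenideal_def using w by blast
      then show "w \<in> ratliff_rush R m (Suc s) \<inter> (J \<cdot> ratliff_rush R m s <+>\<^bsub>R\<^esub> PIdl x)"
        using sub w by blast
    qed
  qed
qed

lemma induced_map_bij_betw:
  assumes "\<And>p q. p \<in> S \<Longrightarrow> q \<in> S \<Longrightarrow> g p = g q \<longleftrightarrow> h p = h q"
  shows "bij_betw (\<lambda>C. g (SOME p. p \<in> S \<and> C = h p)) (h ` S) (g ` S)"
proof -
  define rep where "rep C = (SOME p. p \<in> S \<and> C = h p)" for C
  have rep: "rep (h q) \<in> S" "h (rep (h q)) = h q" if "q \<in> S" for q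
    using someI[of "\<lambda>p. p \<in> S \<and> h q = h p" q] that unfolding rep_def by auto
  then have g_rep: "g (rep (h q)) = g q" if "q \<in> S" for q
    using assms that by blast
  have "inj_on (g \<circ> rep) (h ` S)"
    by (rule inj_onI) (auto simp: g_rep assms)
  moreover have "(g \<circ> rep) ` h ` S = g ` S"
    by (force simp: g_rep image_iff)
  ultimately show ?thesis unfolding bij_betw_def rep_def comp_def by blast
qed

text \<open>The value of eta on the class of p, free of the representative that eta picks by SOME.\<close>

definition eta_on_rep :: "('a, 'b) ring_scheme \<Rightarrow> 'a set \<Rightarrow> 'a set \<Rightarrow> 'a set \<Rightarrow> nat \<Rightarrow> 'a \<Rightarrow> 'a set set"
  where "eta_on_rep A m J X1 i p =
    (let B = A Quot X1 in
     ideal_prod B (qimg A X1 J) (ratliff_rush B (qimg A X1 m) i) +>\<^bsub>B\<^esub> (X1 +>\<^bsub>A\<^esub> p))"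

lemma eta_eq_eta_on_rep:
  "eta A m J X1 i = (\<lambda>C. eta_on_rep A m J X1 i
     (SOME p. p \<in> ratliff_rush A m (Suc i) \<and> C = ideal_prod A J (ratliff_rush A m i) +>\<^bsub>A\<^esub> p))"
  by (simp add: fun_eq_iff eta_def eta_on_rep_def Let_def)

lemma eta_dom_eq_image:
  "eta_dom A m J i = (\<lambda>p. ideal_prod A J (ratliff_rush A m i) +>\<^bsub>A\<^esub> p) ` ratliff_rush A m (Suc i)"
  by (simp add: eta_dom_def Setcompr_eq_image)

lemma eta_cod_eq_image:
  assumes "qimg A X1 (ratliff_rush A m (Suc i)) = ratliff_rush (A Quot X1) (qimg A X1 m) (Suc i)"
  shows "eta_cod A m J X1 i = eta_on_rep A m J X1 i ` ratliff_rush A m (Suc i)"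
  unfolding eta_cod_def eta_on_rep_def Let_def assms[symmetric] by (auto simp: qimg_def)

lemma (in cring) eta_on_rep_eq_iff:
  assumes m: "ideal m R" and J: "ideal J R" "J \<subseteq> m" and x: "superficial R m x" "x \<in> J"
    and RRs: "qimg R (PIdl x) (ratliff_rush R m s)
      = ratliff_rush (R Quot PIdl x) (qimg R (PIdl x) m) s"
    and p: "p \<in> ratliff_rush R m (Suc s)" and q: "q \<in> ratliff_rush R m (Suc s)"
  shows "eta_on_rep R m J (PIdl x) s p = eta_on_rep R m J (PIdl x) s q
    \<longleftrightarrow> J \<cdot> ratliff_rush R m s +> p = J \<cdot> ratliff_rush R m s +> q"
proof -
  define N where "N = PIdl x"
  define P where "P = J \<cdot> ratliff_rush R m s"
  have xc: "x \<in> carrier R" by (rule ideal.Icarr[OF J(1) x(2)])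
  have N: "ideal N R" unfolding N_def by (rule cgenideal_ideal[OF xc])
  interpret B: ring "R Quot N" by (rule ideal.quotient_is_ring[OF N])
  interpret q: ring_hom_cring R "R Quot N" "(+>) N" by (rule ideal.rcos_ring_hom_cring[OF N is_cring])
  interpret RR: ideal "ratliff_rush R m k" R for k by (rule ratliff_rush_ideal[OF m])
  have P: "ideal P R" unfolding P_def by (rule ideal_prod_is_ideal[OF J(1) RR.is_ideal])
  have Ps: "qimg R N J \<cdot>\<^bsub>R Quot N\<^esub> ratliff_rush (R Quot N) (qimg R N m) s = qimg R N P"
    using RRs qimg_ideal_prod[OF N J(1) RR.is_ideal] unfolding N_def P_def by simp
  have "ideal (qimg R N P) (R Quot N)"
    unfolding qimg_def by (rule ring_ideal_imp_quot_ideal[OF N P])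
  moreover have pc: "p \<in> carrier R" and qc: "q \<in> carrier R" using p q RR.Icarr by auto
  moreover have pqc: "p \<ominus> q \<in> carrier R" using pc qc by simp
  moreover have "p \<ominus> q \<in> ratliff_rush R m (Suc s)"
    unfolding a_minus_def by (intro RR.a_closed RR.a_inv_closed p q)
  ultimately have "eta_on_rep R m J N s p = eta_on_rep R m J N s q
      \<longleftrightarrow> (N +> p) \<ominus>\<^bsub>R Quot N\<^esub> (N +> q) \<in> qimg R N P"
    unfolding eta_on_rep_def Let_def Ps
    by (intro B.quotient_eq_iff_same_a_r_cos[symmetric] q.hom_closed)
  also have "\<dots> \<longleftrightarrow> N +> (p \<ominus> q) \<in> qimg R N P"
    using pc qc by (simp add: a_minus_def)
  also have "\<dots> \<longleftrightarrow> p \<ominus> q \<in> P <+>\<^bsub>R\<^esub> N"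
    by (rule rcos_mem_qimg_iff[OF N P pqc])
  also have "\<dots> \<longleftrightarrow> p \<ominus> q \<in> P"
    using ratliff_rush_Suc_inter_ideal_prod[OF m x J(2), of s] \<open>p \<ominus> q \<in> ratliff_rush R m (Suc s)\<close>
    unfolding P_def N_def by blast
  also have "\<dots> \<longleftrightarrow> P +> p = P +> q"
    by (rule quotient_eq_iff_same_a_r_cos[OF P pc qc])
  finally show ?thesis unfolding N_def P_def .
qed

lemma (in cring) eta_bij_betw:
  assumes m: "ideal m R" and J: "ideal J R" "J \<subseteq> m" and x: "superficial R m x" "x \<in> J"
    and RRs: "qimg R (PIdl x) (ratliff_rush R m s)
      = ratliff_rush (R Quot PIdl x) (qimg R (PIdl x) m) s"
  shows "bij_betw (eta R m J (PIdl x) s) (eta_dom R m J s)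
    (eta_on_rep R m J (PIdl x) s ` ratliff_rush R m (Suc s))"
  unfolding eta_eq_eta_on_rep eta_dom_eq_image
  by (rule induced_map_bij_betw) (rule eta_on_rep_eq_iff[OF assms])

theorem mainTheorem7:
  fixes A :: "('a, 'b) ring_scheme" and m :: "'a set" and x :: "nat \<Rightarrow> 'a" and d :: nat
  assumes CM: "cohen_macaulay A m"
    and dim: "krull_dim A d"
    and d2: "d \<ge> 2"
    and inf_res: "infinite (carrier (A Quot m))"
    and xcarr: "\<forall>i\<in>{1..d}. x i \<in> carrier A"
    and sup: "superficial_seq A m x d"
  defines "J \<equiv> genideal A (x ` {1..d})"
    and "X1 \<equiv> genideal A {x 1}"
  defines "B \<equiv> A Quot X1"
    and "n \<equiv> qimg A X1 m"
  shows "(\<forall>s. qimg A X1 (ratliff_rush A m s) = ratliff_rush B n s \<longrightarrow>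
             inj_on (eta A m J X1 s) (eta_dom A m J s))
       \<and> (\<forall>s. qimg A X1 (ratliff_rush A m s) = ratliff_rush B n s \<and>
              qimg A X1 (ratliff_rush A m (Suc s)) = ratliff_rush B n (Suc s) \<longrightarrow>
             bij_betw (eta A m J X1 s) (eta_dom A m J s) (eta_cod A m J X1 s))"
proof -
  interpret A: cring A using CM unfolding cohen_macaulay_def local_ring_def by blast
  have m: "ideal m A"
    using CM maximalideal.axioms(1) unfolding cohen_macaulay_def local_ring_def by blast
  have "x ` {1..d} \<subseteq> carrier A" "x ` {1..d} \<subseteq> m"
    using xcarr A.superficial_seq_mem[OF m xcarr sup] by auto
  then have J: "ideal J A" "J \<subseteq> m"
    unfolding J_def by (simp_all add: A.genideal_ideal A.genideal_minimal[OF m])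
  have "x 1 \<in> x ` {1..d}" using d2 by simp
  then have x1: "superficial A m (x 1)" "x 1 \<in> J"
    using sup A.genideal_self[OF \<open>x ` {1..d} \<subseteq> carrier A\<close>]
    unfolding superficial_seq_def J_def by auto
  have X1: "X1 = PIdl\<^bsub>A\<^esub> (x 1)"
    unfolding X1_def using xcarr d2 by (simp add: A.cgenideal_eq_genideal)
  have bij: "bij_betw (eta A m J X1 s) (eta_dom A m J s) (eta_on_rep A m J X1 s ` ratliff_rush A m (Suc s))"
    if "qimg A X1 (ratliff_rush A m s) = ratliff_rush B n s" for s
    using A.eta_bij_betw[OF m J x1] that unfolding X1 B_def n_def by simp
  show ?thesis
    using bij bij_betw_imp_inj_on eta_cod_eq_image[of A X1 m] unfolding B_def n_def by metis
qed

end
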